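(* Let $C$ be an $[n,k,d]$ and $C'$ an $[n',k',d']$ linear code over $\mathbb{F}_q$, let $x \in C \times C'$, $y = x + e$, and perform the column decoding described in the context. Let $Z = \{ j \in [n'] : \alpha_j = 0\}$. If $2|I_E| < d'$, then for every row index $i \in [n]$, $$2\, w_{Z}(\hat{x}^i - x^i) + |Z| < d'.$$
   Context: The product code $C \times C'$ consists of the $n \times n'$ matrices over $\mathbb{F}_q$ all of whose columns lie in $C$ and all of whose rows lie in $C'$. For a matrix $b$, $b_j$ is its $j$-th column and $b^i$ its $i$-th row; $w(\cdot)$ is Hamming weight; for $v \in \mathbb{F}_q^{n'}$ and $E \subseteq [n']$, $w_E(v)$ is the number of $j \notin E$ with $v_j \ne 0$. Let $t = \lfloor (d-1)/2 \rfloor$. Each column $y_j$ is decoded by a bounded-distance decoder for $C$ returning the unique codeword within distance $t$ of $y_j$ if it exists, otherwise failing. On success with output $\hat{x}_j$ put $\alpha_j = (d - 2w(y_j - \hat{x}_j))/d$; on failure put $\hat{x}_j = y_j$ and $\alpha_j = 0$. $\hat{x}$ is the matrix with columns $\hat{x}_j$, and $I_E \subseteq [n']$ is the set of $j$ for which decoding failed or $\hat{x}_j \neq x_j$. *)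

theory Defs
  imports Complex_Main "HOL.Vector_Spaces" "HOL-Library.Function_Algebras"
begin

text \<open>Vectors in F_q^n are functions nat => 'a, considered on the indices {..<n};
  codewords are normalized to vanish outside {..<n}. Matrices are functions
  nat => nat => 'a, with b i j the entry in row i (i < n) and column j (j < n').\<close>

definition fscale :: "'a::field \<Rightarrow> (nat \<Rightarrow> 'a) \<Rightarrow> (nat \<Rightarrow> 'a)" where
  "fscale c v = (\<lambda>j. c * v j)"

definition hw :: "nat \<Rightarrow> (nat \<Rightarrow> 'a::zero) \<Rightarrow> nat" where
  "hw n v = card {j. j < n \<and> v j \<noteq> 0}"

definition hw_out :: "nat \<Rightarrow> nat set \<Rightarrow> (nat \<Rightarrow> 'a::zero) \<Rightarrow> nat" where
  "hw_out n E v = card {j. j < n \<and> j \<notin> E \<and> v j \<noteq> 0}"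

definition linear_code :: "nat \<Rightarrow> nat \<Rightarrow> nat \<Rightarrow> (nat \<Rightarrow> 'a::{finite,field}) set \<Rightarrow> bool" where
  "linear_code n k d C \<longleftrightarrow>
     C \<subseteq> {v. \<forall>j\<ge>n. v j = 0} \<and>
     module.subspace fscale C \<and>
     vector_space.dim fscale C = k \<and>
     (\<exists>c\<in>C. c \<noteq> 0 \<and> hw n c = d) \<and>
     (\<forall>c\<in>C. c \<noteq> 0 \<longrightarrow> d \<le> hw n c)"

definition col :: "nat \<Rightarrow> (nat \<Rightarrow> nat \<Rightarrow> 'a::zero) \<Rightarrow> nat \<Rightarrow> (nat \<Rightarrow> 'a)" where
  "col n b j = (\<lambda>i. if i < n then b i j else 0)"

definition row :: "nat \<Rightarrow> (nat \<Rightarrow> nat \<Rightarrow> 'a::zero) \<Rightarrow> nat \<Rightarrow> (nat \<Rightarrow> 'a)" where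
  "row n' b i = (\<lambda>j. if j < n' then b i j else 0)"

definition product_code ::
  "nat \<Rightarrow> nat \<Rightarrow> (nat \<Rightarrow> 'a::zero) set \<Rightarrow> (nat \<Rightarrow> 'a) set \<Rightarrow> (nat \<Rightarrow> nat \<Rightarrow> 'a) set" where
  "product_code n n' C C' =
     {b. (\<forall>j<n'. col n b j \<in> C) \<and> (\<forall>i<n. row n' b i \<in> C')}"

definition bd_decode ::
  "nat \<Rightarrow> (nat \<Rightarrow> 'a::ab_group_add) set \<Rightarrow> nat \<Rightarrow> (nat \<Rightarrow> 'a) \<Rightarrow> (nat \<Rightarrow> 'a) option" where
  "bd_decode n C t y =
     (if \<exists>!c. c \<in> C \<and> hw n (y - c) \<le> t
      then Some (THE c. c \<in> C \<and> hw n (y - c) \<le> t) else None)"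

definition dec_col ::
  "nat \<Rightarrow> (nat \<Rightarrow> 'a::ab_group_add) set \<Rightarrow> nat \<Rightarrow> (nat \<Rightarrow> nat \<Rightarrow> 'a) \<Rightarrow> nat \<Rightarrow> (nat \<Rightarrow> 'a)" where
  "dec_col n C d y j =
     (case bd_decode n C ((d - 1) div 2) (col n y j) of
        Some c \<Rightarrow> c | None \<Rightarrow> col n y j)"

definition dec_mat ::
  "nat \<Rightarrow> (nat \<Rightarrow> 'a::ab_group_add) set \<Rightarrow> nat \<Rightarrow> (nat \<Rightarrow> nat \<Rightarrow> 'a) \<Rightarrow> (nat \<Rightarrow> nat \<Rightarrow> 'a)" where
  "dec_mat n C d y = (\<lambda>i j. dec_col n C d y j i)"

definition alpha ::
  "nat \<Rightarrow> (nat \<Rightarrow> 'a::ab_group_add) set \<Rightarrow> nat \<Rightarrow> (nat \<Rightarrow> nat \<Rightarrow> 'a) \<Rightarrow> nat \<Rightarrow> real" where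
  "alpha n C d y j =
     (case bd_decode n C ((d - 1) div 2) (col n y j) of
        Some c \<Rightarrow> (real d - 2 * real (hw n (col n y j - c))) / real d
      | None \<Rightarrow> 0)"

definition err_cols ::
  "nat \<Rightarrow> nat \<Rightarrow> (nat \<Rightarrow> 'a::ab_group_add) set \<Rightarrow> nat \<Rightarrow> (nat \<Rightarrow> nat \<Rightarrow> 'a) \<Rightarrow> (nat \<Rightarrow> nat \<Rightarrow> 'a) \<Rightarrow> nat set" where
  "err_cols n n' C d x y =
     {j. j < n' \<and> (bd_decode n C ((d - 1) div 2) (col n y j) = None \<or>
                    dec_col n C d y j \<noteq> col n x j)}"

end

theory Submission
  imports Defs
begin

text \<open>Columns with \<open>\<alpha>\<^sub>j = 0\<close> are exactly those where the bounded-distance decoder failed,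
  since a successful decoding within radius \<open>\<lfloor>(d-1)/2\<rfloor>\<close> gives \<open>\<alpha>\<^sub>j > 0\<close>. Hence \<open>Z \<subseteq> I\<^sub>E\<close>, and
  a row \<open>\<hat>x\<^sup>i\<close> can differ from \<open>x\<^sup>i\<close> only in columns of \<open>I\<^sub>E\<close>. So outside \<open>Z\<close> the row error is
  supported in \<open>I\<^sub>E - Z\<close>, giving \<open>w\<^sub>Z(\<hat>x\<^sup>i - x\<^sup>i) + |Z| \<le> |I\<^sub>E|\<close>, and the claim follows from
  \<open>2|I\<^sub>E| < d'\<close>.\<close>

lemma bd_decode_Some_hw_le:
  assumes "bd_decode n C t y = Some c"
  shows "hw n (y - c) \<le> t"
proof -
  have uniq: "\<exists>!c. c \<in> C \<and> hw n (y - c) \<le> t"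
    and c: "c = (THE c. c \<in> C \<and> hw n (y - c) \<le> t)"
    using assms unfolding bd_decode_def by (auto split: if_splits)
  from theI'[OF uniq] c show ?thesis by simp
qed

lemma linear_code_min_dist_pos:
  assumes "linear_code n k d C"
  shows "0 < d"
proof -
  from assms obtain c where "c \<in> C" "c \<noteq> 0" "hw n c = d" and vanish: "\<forall>j\<ge>n. c j = 0"
    unfolding linear_code_def by blast
  from \<open>c \<noteq> 0\<close> obtain j where "c j \<noteq> 0" by (auto simp: fun_eq_iff)
  with vanish have "j < n" by (meson not_le)
  with \<open>c j \<noteq> 0\<close> have "card {j. j < n \<and> c j \<noteq> 0} \<noteq> 0" by auto
  with \<open>hw n c = d\<close> show ?thesis unfolding hw_def by simp
qed

lemma alpha_eq_0_iff_decoding_failed: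
  assumes "0 < d"
  shows "alpha n C d y j = 0 \<longleftrightarrow> bd_decode n C ((d - 1) div 2) (col n y j) = None"
proof (cases "bd_decode n C ((d - 1) div 2) (col n y j)")
  case None
  then show ?thesis unfolding alpha_def by simp
next
  case (Some c)
  have "2 * hw n (col n y j - c) < d"
    using bd_decode_Some_hw_le[OF Some] assms by linarith
  then have "0 < alpha n C d y j"
    using assms unfolding alpha_def Some by simp
  then show ?thesis using Some by simp
qed

lemma zero_alpha_cols_subset_err_cols:
  assumes "0 < d"
  shows "{j. j < n' \<and> alpha n C d y j = 0} \<subseteq> err_cols n n' C d x y"
  unfolding err_cols_def by (auto simp: alpha_eq_0_iff_decoding_failed[OF assms])

lemma row_error_support_subset_err_cols:
  assumes "i < n"
  shows "{j. j < n' \<and> (row n' (dec_mat n C d y) i - row n' x i) j \<noteq> 0} \<subseteq> err_cols n n' C d x y"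
proof
  fix j assume "j \<in> {j. j < n' \<and> (row n' (dec_mat n C d y) i - row n' x i) j \<noteq> 0}"
  then have "j < n'" and "dec_col n C d y j i \<noteq> col n x j i"
    using assms unfolding row_def dec_mat_def col_def by auto
  then show "j \<in> err_cols n n' C d x y"
    unfolding err_cols_def by auto
qed

lemma hw_out_add_card_le:
  assumes "finite I" "Z \<subseteq> I" and support: "{j. j < n \<and> v j \<noteq> 0} \<subseteq> I"
  shows "hw_out n Z v + card Z \<le> card I"
proof -
  have "{j. j < n \<and> j \<notin> Z \<and> v j \<noteq> 0} \<subseteq> I - Z" using support by blast
  then have "hw_out n Z v \<le> card (I - Z)"
    unfolding hw_out_def using assms(1) by (simp add: card_mono)
  moreover have "card (I - Z) + card Z = card I"
    using assms(1,2) by (metis card_Diff_subset card_mono finite_subset le_add_diff_inverse2)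
  ultimately show ?thesis by linarith
qed

theorem mainTheorem4:
  fixes C C' :: "(nat \<Rightarrow> 'a::{finite,field}) set"
    and n k d n' k' d' :: nat
    and x e :: "nat \<Rightarrow> nat \<Rightarrow> 'a"
  assumes "linear_code n k d C"
    and "linear_code n' k' d' C'"
    and "x \<in> product_code n n' C C'"
    and "2 * card (err_cols n n' C d x (x + e)) < d'"
  shows "\<forall>i<n.
           2 * hw_out n' {j. j < n' \<and> alpha n C d (x + e) j = 0}
                 (row n' (dec_mat n C d (x + e)) i - row n' x i)
           + card {j. j < n' \<and> alpha n C d (x + e) j = 0} < d'"
proof (intro allI impI)
  fix i assume "i < n"
  let ?Z = "{j. j < n' \<and> alpha n C d (x + e) j = 0}"
  let ?I = "err_cols n n' C d x (x + e)"
  have "finite ?I" unfolding err_cols_def by simp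
  have "hw_out n' ?Z (row n' (dec_mat n C d (x + e)) i - row n' x i) + card ?Z \<le> card ?I"
    using hw_out_add_card_le[OF \<open>finite ?I\<close>
        zero_alpha_cols_subset_err_cols[OF linear_code_min_dist_pos[OF assms(1)]]
        row_error_support_subset_err_cols[OF \<open>i < n\<close>]] .
  with assms(4) show "2 * hw_out n' ?Z (row n' (dec_mat n C d (x + e)) i - row n' x i)
      + card ?Z < d'" by linarith
qed

end
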